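(* For the Byzantine-tolerant algorithm described in the context: let $\gamma$ be a degree-stabilized configuration and let $\gamma\xrightarrow{t}\gamma'$ be a transition in which the rule Candidacy? is executed on a node $u\in V_1$ (the set $t$ being arbitrary otherwise). Then, whatever the other moves in $t$ and the behaviour of Byzantine nodes, the probability that $s_u^{\gamma'}=\top$ and $s_v^{\gamma'}=\bot$ for all $v\in N(u)$ is at least $\frac{1}{e(\Delta+1)}$.
   Context: Network and model. $G=(V,E)$ is a finite simple undirected graph; $N(u)$ is the open neighbourhood of $u$, $N[u]=N(u)\cup\{u\}$, $\deg(u)=|N(u)|$, $\Delta=\max_{u\in V}\deg(u)$. Each node holds local variables; a configuration is an assignment of values to all local variables. A rule "guard $\to$ command" is enabled on $u$ in $\gamma$ if its guard (a predicate on the variables of $u$ and its neighbours) holds; its command rewrites only $u$'s variables, possibly randomly. A transition $\gamma\xrightarrow{t}\gamma'$ is given by a nonempty set $t$ of moves $(u,r)$ with $r$ enabled on $u$ in $\gamma$, at most one per node, all executed simultaneously from the values in $\gamma$, with independent random choices. Byzantine nodes. A subset $B\subseteq V$ consists of Byzantine nodes, which when activated may set their local variables to arbitrary values. $d(u,B)$ is the graph distance from $u$ to $B$ and $V_i=\{u\in V: d(u,B)>i\}$. Algorithm. Each node $u$ has variables $s_u\in\{\bot,\top\}$ and $x_u\in\mathbb{N}$; $Rand(q)$ returns $1$ with probability $q$, else $0$, independently for each call. Non-Byzantine nodes follow the rules: (Refresh) $x_u\neq \deg(u)\ \to\ x_u:=\deg(u)$. (Candidacy?) $x_u=\deg(u)\wedge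 s_u=\bot\wedge \forall v\in N(u),\ s_v=\bot\ \to$ if $Rand\big(\frac{1}{1+\max\{x_v: v\in N[u]\}}\big)=1$ then $s_u:=\top$. (Withdrawal) $x_u=\deg(u)\wedge s_u=\top\wedge \exists v\in N(u),\ s_v=\top\ \to\ s_u:=\bot$. $\gamma$ is degree-stabilized if $x_u^\gamma=\deg(u)$ for every non-Byzantine node $u$. *)

theory Defs
  imports "HOL-Probability.Probability"
begin

definition simple_graph :: "'a set \<Rightarrow> ('a \<Rightarrow> 'a \<Rightarrow> bool) \<Rightarrow> bool" where
  "simple_graph V E \<longleftrightarrow> finite V \<and> (\<forall>u v. E u v \<longrightarrow> u \<in> V \<and> v \<in> V)
     \<and> (\<forall>u v. E u v \<longrightarrow> E v u) \<and> (\<forall>u. \<not> E u u)"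

definition nbh :: "'a set \<Rightarrow> ('a \<Rightarrow> 'a \<Rightarrow> bool) \<Rightarrow> 'a \<Rightarrow> 'a set" where
  "nbh V E u = {v \<in> V. E u v}"

definition cnbh :: "'a set \<Rightarrow> ('a \<Rightarrow> 'a \<Rightarrow> bool) \<Rightarrow> 'a \<Rightarrow> 'a set" where
  "cnbh V E u = insert u (nbh V E u)"

definition deg :: "'a set \<Rightarrow> ('a \<Rightarrow> 'a \<Rightarrow> bool) \<Rightarrow> 'a \<Rightarrow> nat" where
  "deg V E u = card (nbh V E u)"

definition maxdeg :: "'a set \<Rightarrow> ('a \<Rightarrow> 'a \<Rightarrow> bool) \<Rightarrow> nat" where
  "maxdeg V E = Max (deg V E ` V)"

text \<open>Adjacency as a relation; \<open>d(u,B) \<le> i\<close> iff some Byzantine node is reached by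
  a walk of length at most i. \<open>V_i = {u. d(u,B) > i}\<close> (with d(u,{}) = \<infinity>).\<close>
definition adj :: "'a set \<Rightarrow> ('a \<Rightarrow> 'a \<Rightarrow> bool) \<Rightarrow> ('a \<times> 'a) set" where
  "adj V E = {(a, b). a \<in> V \<and> b \<in> V \<and> E a b}"

definition Vdist :: "'a set \<Rightarrow> ('a \<Rightarrow> 'a \<Rightarrow> bool) \<Rightarrow> 'a set \<Rightarrow> nat \<Rightarrow> 'a set" where
  "Vdist V E B i = {u \<in> V. \<not> (\<exists>k\<le>i. \<exists>b\<in>B. (u, b) \<in> adj V E ^^ k)}"

datatype sval = Bot | Top

type_synonym 'a cfg = "('a \<Rightarrow> sval) \<times> ('a \<Rightarrow> nat)"

definition s_of :: "'a cfg \<Rightarrow> 'a \<Rightarrow> sval" where "s_of g = fst g"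
definition x_of :: "'a cfg \<Rightarrow> 'a \<Rightarrow> nat" where "x_of g = snd g"

text \<open>Moves: the three rules of non-Byzantine nodes, and an arbitrary
  rewrite (new values of s and x) of a Byzantine node.\<close>
datatype move = Refresh | Candidacy | Withdrawal | ByzMove sval nat

definition refresh_enabled :: "'a set \<Rightarrow> ('a \<Rightarrow> 'a \<Rightarrow> bool) \<Rightarrow> 'a cfg \<Rightarrow> 'a \<Rightarrow> bool" where
  "refresh_enabled V E g u \<longleftrightarrow> x_of g u \<noteq> deg V E u"

definition cand_enabled :: "'a set \<Rightarrow> ('a \<Rightarrow> 'a \<Rightarrow> bool) \<Rightarrow> 'a cfg \<Rightarrow> 'a \<Rightarrow> bool" where
  "cand_enabled V E g u \<longleftrightarrow> x_of g u = deg V E u \<and> s_of g u = Bot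
      \<and> (\<forall>v\<in>nbh V E u. s_of g v = Bot)"

definition withd_enabled :: "'a set \<Rightarrow> ('a \<Rightarrow> 'a \<Rightarrow> bool) \<Rightarrow> 'a cfg \<Rightarrow> 'a \<Rightarrow> bool" where
  "withd_enabled V E g u \<longleftrightarrow> x_of g u = deg V E u \<and> s_of g u = Top
      \<and> (\<exists>v\<in>nbh V E u. s_of g v = Top)"

definition cand_prob :: "'a set \<Rightarrow> ('a \<Rightarrow> 'a \<Rightarrow> bool) \<Rightarrow> 'a cfg \<Rightarrow> 'a \<Rightarrow> real" where
  "cand_prob V E g u = 1 / (1 + real (Max (x_of g ` cnbh V E u)))"

text \<open>A transition is given by a map t from nodes to at most one move each;
  it is valid if it is nonempty, every move of a non-Byzantine node is an
  enabled rule, Byzantine nodes only perform Byzantine moves, and only nodes of V move.\<close>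
definition valid_transition ::
  "'a set \<Rightarrow> ('a \<Rightarrow> 'a \<Rightarrow> bool) \<Rightarrow> 'a set \<Rightarrow> 'a cfg \<Rightarrow> ('a \<Rightarrow> move option) \<Rightarrow> bool" where
  "valid_transition V E B g t \<longleftrightarrow>
     (\<exists>u. t u \<noteq> None) \<and>
     (\<forall>u. u \<notin> V \<longrightarrow> t u = None) \<and>
     (\<forall>u\<in>V - B. t u = None \<or>
        (t u = Some Refresh \<and> refresh_enabled V E g u) \<or>
        (t u = Some Candidacy \<and> cand_enabled V E g u) \<or>
        (t u = Some Withdrawal \<and> withd_enabled V E g u)) \<and>
     (\<forall>u\<in>B. t u = None \<or> (\<exists>a n. t u = Some (ByzMove a n)))"

text \<open>Outcome of executing the transition t from g, given the results c of the
  random calls (c u is the result of Rand on node u).\<close>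
definition step :: "'a set \<Rightarrow> ('a \<Rightarrow> 'a \<Rightarrow> bool) \<Rightarrow> 'a cfg \<Rightarrow> ('a \<Rightarrow> move option)
    \<Rightarrow> ('a \<Rightarrow> bool) \<Rightarrow> 'a cfg" where
  "step V E g t c =
     ((\<lambda>u. case t u of
            Some Candidacy \<Rightarrow> (if c u then Top else s_of g u)
          | Some Withdrawal \<Rightarrow> Bot
          | Some (ByzMove a n) \<Rightarrow> a
          | _ \<Rightarrow> s_of g u),
      (\<lambda>u. case t u of
            Some Refresh \<Rightarrow> deg V E u
          | Some (ByzMove a n) \<Rightarrow> n
          | _ \<Rightarrow> x_of g u))"

definition coins :: "'a set \<Rightarrow> ('a \<Rightarrow> 'a \<Rightarrow> bool) \<Rightarrow> 'a cfg \<Rightarrow> ('a \<Rightarrow> move option)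
    \<Rightarrow> ('a \<Rightarrow> bool) pmf" where
  "coins V E g t = Pi_pmf {v \<in> V. t v = Some Candidacy} False
      (\<lambda>v. bernoulli_pmf (cand_prob V E g v))"

definition trans_dist :: "'a set \<Rightarrow> ('a \<Rightarrow> 'a \<Rightarrow> bool) \<Rightarrow> 'a cfg \<Rightarrow> ('a \<Rightarrow> move option)
    \<Rightarrow> 'a cfg pmf" where
  "trans_dist V E g t = map_pmf (step V E g t) (coins V E g t)"

definition degree_stabilized :: "'a set \<Rightarrow> ('a \<Rightarrow> 'a \<Rightarrow> bool) \<Rightarrow> 'a set \<Rightarrow> 'a cfg \<Rightarrow> bool" where
  "degree_stabilized V E B g \<longleftrightarrow> (\<forall>u\<in>V - B. x_of g u = deg V E u)"

end

theory Submission
  imports Defs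
begin

text \<open>Since u is at distance at least 2 from B, u and its neighbours follow the
  algorithm, and the guard of Candidacy? on u makes all of them \<open>\<bottom>\<close>. A neighbour
  therefore ends at \<open>\<bottom>\<close> unless it executes Candidacy? itself and its coin succeeds.
  By degree-stabilization the coin of u succeeds with probability at least
  \<open>1/(\<Delta>+1)\<close>, while every neighbour v sees \<open>x\<^sub>u = deg u\<close> in \<open>N[v]\<close> and so succeeds with
  probability at most \<open>1/(deg u + 1)\<close>. By independence the probability is at least
  \<open>1/(\<Delta>+1) \<cdot> (1 - 1/(d+1))\<^sup>d \<ge> 1/(e(\<Delta>+1))\<close>.\<close>

lemma exp_neg_one_le_power_div_Suc: "exp (-1) \<le> (real d / (real d + 1)) ^ d"
proof (cases "d = 0")
  case False
  have "(1 + 1 / real d) ^ d \<le> exp 1"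
    using exp_ge_one_plus_x_over_n_power_n[of d 1] False by simp
  moreover have "0 < (1 + 1 / real d) ^ d"
    by (simp add: add_pos_nonneg)
  ultimately have "inverse (exp 1) \<le> inverse ((1 + 1 / real d) ^ d)"
    by (rule le_imp_inverse_le)
  moreover have "real d / (real d + 1) = inverse (1 + 1 / real d)"
    using False by (simp add: field_simps)
  ultimately show ?thesis
    by (simp add: exp_minus power_inverse)
qed simp

lemma exp_neg_one_le_prod_one_minus:
  fixes q :: "'a \<Rightarrow> real"
  assumes "finite S" and "card S \<le> d" and "\<And>v. v \<in> S \<Longrightarrow> q v \<le> 1 / (real d + 1)"
  shows "exp (-1) \<le> (\<Prod>v\<in>S. 1 - q v)"
proof -
  have "exp (-1) \<le> (real d / (real d + 1)) ^ d"
    by (rule exp_neg_one_le_power_div_Suc)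
  also have "\<dots> \<le> (real d / (real d + 1)) ^ card S"
    using assms(2) by (intro power_decreasing) auto
  also have "\<dots> = (\<Prod>v\<in>S. 1 - 1 / (real d + 1))"
    by (simp add: field_simps)
  also have "\<dots> \<le> (\<Prod>v\<in>S. 1 - q v)"
    using assms(3) by (intro prod_mono) (auto simp: field_simps)
  finally show ?thesis .
qed

lemma measure_Pi_pmf_bernoulli_pattern:
  fixes p :: "'a \<Rightarrow> real"
  assumes "finite A" and "T \<subseteq> A" and "F \<subseteq> A" and "T \<inter> F = {}"
    and "\<And>x. x \<in> A \<Longrightarrow> 0 \<le> p x \<and> p x \<le> 1"
  shows "measure_pmf.prob (Pi_pmf A dflt (\<lambda>x. bernoulli_pmf (p x)))
           {c. (\<forall>x\<in>T. c x) \<and> (\<forall>x\<in>F. \<not> c x)}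
         = (\<Prod>x\<in>T. p x) * (\<Prod>x\<in>F. 1 - p x)"
proof -
  define C where "C x = (if x \<in> T then {True} else if x \<in> F then {False} else UNIV)" for x
  define f where "f x = measure_pmf.prob (bernoulli_pmf (p x)) (C x)" for x
  have event: "{c. (\<forall>x\<in>T. c x) \<and> (\<forall>x\<in>F. \<not> c x)} = Pi A C"
    using assms(2-4) by (auto simp: C_def Pi_def)
  have fT: "f x = p x" if "x \<in> T" for x
    using that assms(2,5) by (auto simp: f_def C_def measure_pmf_single)
  have fF: "f x = 1 - p x" if "x \<in> F" for x
    using that assms(3-5) by (auto simp: f_def C_def measure_pmf_single)
  have "(\<Prod>x\<in>A. f x) = (\<Prod>x\<in>T \<union> F. f x)"
    using assms(1-3) by (intro prod.mono_neutral_right) (auto simp: f_def C_def)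
  also have "\<dots> = (\<Prod>x\<in>T. f x) * (\<Prod>x\<in>F. f x)"
    using assms(1-4) by (intro prod.union_disjoint) (auto intro: finite_subset)
  also have "\<dots> = (\<Prod>x\<in>T. p x) * (\<Prod>x\<in>F. 1 - p x)"
    using fT fF by simp
  finally show ?thesis
    unfolding event measure_Pi_pmf_Pi[OF assms(1)] f_def .
qed

lemma finite_nbh: "finite V \<Longrightarrow> finite (nbh V E u)"
  by (simp add: nbh_def)

lemma finite_cnbh: "finite V \<Longrightarrow> finite (cnbh V E u)"
  by (simp add: cnbh_def finite_nbh)

lemma mem_cnbh_if_mem_nbh:
  "simple_graph V E \<Longrightarrow> u \<in> V \<Longrightarrow> v \<in> nbh V E u \<Longrightarrow> u \<in> cnbh V E v"
  by (auto simp: simple_graph_def cnbh_def nbh_def)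

lemma deg_le_maxdeg: "finite V \<Longrightarrow> w \<in> V \<Longrightarrow> deg V E w \<le> maxdeg V E"
  by (simp add: maxdeg_def)

lemma Vdist_not_Byzantine: "u \<in> Vdist V E B i \<Longrightarrow> u \<notin> B"
  unfolding Vdist_def by (metis (no_types, lifting) mem_Collect_eq relpow_0_I zero_le)

lemma Vdist_Suc_nbh:
  assumes "u \<in> Vdist V E B (Suc i)" and "v \<in> nbh V E u"
  shows "v \<in> Vdist V E B i"
proof -
  have "(u, v) \<in> adj V E"
    using assms by (auto simp: Vdist_def nbh_def adj_def)
  have "\<not> (\<exists>k\<le>i. \<exists>b\<in>B. (v, b) \<in> adj V E ^^ k)"
  proof
    assume "\<exists>k\<le>i. \<exists>b\<in>B. (v, b) \<in> adj V E ^^ k"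
    then obtain k b where "k \<le> i" and "b \<in> B" and "(v, b) \<in> adj V E ^^ k"
      by blast
    then have "Suc k \<le> Suc i" and "(u, b) \<in> adj V E ^^ Suc k"
      using \<open>(u, v) \<in> adj V E\<close> relpow_Suc_I2 by auto
    then show False
      using assms(1) \<open>b \<in> B\<close> unfolding Vdist_def by blast
  qed
  then show ?thesis
    using assms(2) by (simp add: Vdist_def nbh_def)
qed

lemma cand_prob_nonneg: "0 \<le> cand_prob V E g v"
  by (simp add: cand_prob_def)

lemma cand_prob_le_one: "cand_prob V E g v \<le> 1"
  by (simp add: cand_prob_def)

lemma cand_prob_le:
  assumes "finite V" and "w \<in> cnbh V E v"
  shows "cand_prob V E g v \<le> 1 / (1 + real (x_of g w))"
proof -
  have "x_of g w \<le> Max (x_of g ` cnbh V E v)"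
    using assms by (simp add: finite_cnbh)
  then show ?thesis
    unfolding cand_prob_def by (intro divide_left_mono) auto
qed

lemma cand_prob_ge:
  assumes "finite V" and "\<And>w. w \<in> cnbh V E v \<Longrightarrow> x_of g w \<le> n"
  shows "1 / (1 + real n) \<le> cand_prob V E g v"
proof -
  have "Max (x_of g ` cnbh V E v) \<le> n"
    using assms finite_cnbh[OF assms(1)] by (subst Max_le_iff) (auto simp: cnbh_def)
  then show ?thesis
    unfolding cand_prob_def by (intro divide_left_mono) auto
qed

lemma valid_transition_honest_moveE:
  assumes "valid_transition V E B g t" and "w \<in> V - B"
  obtains "t w = None" | "t w = Some Refresh"
    | "t w = Some Candidacy" and "cand_enabled V E g w" | "t w = Some Withdrawal"
proof -
  have "t w = None \<or>
      (t w = Some Refresh \<and> refresh_enabled V E g w) \<or>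
      (t w = Some Candidacy \<and> cand_enabled V E g w) \<or>
      (t w = Some Withdrawal \<and> withd_enabled V E g w)"
    using assms unfolding valid_transition_def by blast
  then show ?thesis
    using that by blast
qed

text \<open>The outcome on \<open>N[u]\<close> is decided by the coins alone: the only move that can
  turn a neighbour of u from \<open>\<bottom>\<close> to \<open>\<top>\<close> is its own successful Candidacy?.\<close>

lemma step_isolates_candidate:
  assumes "valid_transition V E B g t" and "t u = Some Candidacy"
    and "cand_enabled V E g u" and "nbh V E u \<inter> B = {}"
    and "c u" and "\<And>v. v \<in> nbh V E u \<Longrightarrow> t v = Some Candidacy \<Longrightarrow> \<not> c v"
  shows "s_of (step V E g t c) u = Top \<and> (\<forall>v\<in>nbh V E u. s_of (step V E g t c) v = Bot)"
proof -
  have "s_of (step V E g t c) v = Bot" if v: "v \<in> nbh V E u" for v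
  proof -
    have "v \<in> V - B"
      using v assms(4) by (auto simp: nbh_def)
    moreover have "s_of g v = Bot"
      using assms(3) v by (simp add: cand_enabled_def)
    ultimately show ?thesis
      using assms(6)[OF v] by (cases rule: valid_transition_honest_moveE[OF assms(1)])
        (auto simp: step_def s_of_def)
  qed
  moreover have "s_of (step V E g t c) u = Top"
    using assms(2,5) by (simp add: step_def s_of_def)
  ultimately show ?thesis by blast
qed

lemma isolation_probability_lower_bound:
  assumes "simple_graph V E" and "degree_stabilized V E B g"
    and "u \<in> V - B" and "nbh V E u \<inter> B = {}" and "S \<subseteq> nbh V E u"
  shows "1 / (exp 1 * (real (maxdeg V E) + 1))
           \<le> cand_prob V E g u * (\<Prod>v\<in>S. 1 - cand_prob V E g v)"
proof -
  have finV: "finite V"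
    using assms(1) by (simp add: simple_graph_def)
  have stab: "x_of g w = deg V E w" if "w \<in> V - B" for w
    using assms(2) that by (simp add: degree_stabilized_def)
  have "x_of g w \<le> maxdeg V E" if "w \<in> cnbh V E u" for w
  proof -
    have "w \<in> V - B"
      using that assms(3,4) by (auto simp: cnbh_def nbh_def)
    then show ?thesis
      using stab deg_le_maxdeg[OF finV] by simp
  qed
  then have pu: "1 / (real (maxdeg V E) + 1) \<le> cand_prob V E g u"
    using cand_prob_ge[OF finV] by (simp add: add.commute)
  have "cand_prob V E g v \<le> 1 / (real (deg V E u) + 1)" if "v \<in> S" for v
  proof -
    have "u \<in> cnbh V E v"
      using mem_cnbh_if_mem_nbh[OF assms(1)] that assms(3,5) by blast
    then have "cand_prob V E g v \<le> 1 / (1 + real (x_of g u))"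
      by (rule cand_prob_le[OF finV])
    then show ?thesis
      using stab assms(3) by (simp add: add.commute)
  qed
  moreover have "card S \<le> deg V E u"
    unfolding deg_def using assms(5) finite_nbh[OF finV] by (rule card_mono[rotated])
  moreover have "finite S"
    using assms(5) finite_nbh[OF finV] by (rule finite_subset)
  ultimately have "exp (-1) \<le> (\<Prod>v\<in>S. 1 - cand_prob V E g v)"
    by (intro exp_neg_one_le_prod_one_minus)
  with pu have "1 / (real (maxdeg V E) + 1) * exp (-1)
      \<le> cand_prob V E g u * (\<Prod>v\<in>S. 1 - cand_prob V E g v)"
    by (intro mult_mono) (auto simp: cand_prob_nonneg)
  then show ?thesis
    by (simp add: exp_minus field_simps)
qed

theorem mainTheorem8:
  fixes V :: "'a set" and E :: "'a \<Rightarrow> 'a \<Rightarrow> bool" and B :: "'a set"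
    and g :: "'a cfg" and t :: "'a \<Rightarrow> move option" and u :: 'a
  assumes "simple_graph V E"
    and "B \<subseteq> V"
    and "degree_stabilized V E B g"
    and "valid_transition V E B g t"
    and "u \<in> Vdist V E B 1"
    and "t u = Some Candidacy"
  shows "measure_pmf.prob (trans_dist V E g t)
           {g'. s_of g' u = Top \<and> (\<forall>v\<in>nbh V E u. s_of g' v = Bot)}
         \<ge> 1 / (exp 1 * (real (maxdeg V E) + 1))"
proof -
  define A where "A = {v \<in> V. t v = Some Candidacy}"
  define S where "S = {v \<in> nbh V E u. t v = Some Candidacy}"
  let ?p = "cand_prob V E g"
  let ?target = "{g'. s_of g' u = Top \<and> (\<forall>v\<in>nbh V E u. s_of g' v = Bot)}"
  let ?isolated = "{c. (\<forall>x\<in>{u}. c x) \<and> (\<forall>x\<in>S. \<not> c x)}"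
  have u: "u \<in> V - B"
    using assms(5) Vdist_not_Byzantine by (fastforce simp: Vdist_def)
  have nbh_B: "nbh V E u \<inter> B = {}"
    using Vdist_Suc_nbh[of u V E B 0] assms(5) Vdist_not_Byzantine by (metis One_nat_def disjoint_iff)
  have cand_enabled: "cand_enabled V E g u"
    using u assms(6) by (cases rule: valid_transition_honest_moveE[OF assms(4)]) auto
  have A: "finite A" "u \<in> A"
    using assms(1,6) u by (auto simp: A_def simple_graph_def)
  have S: "S \<subseteq> nbh V E u" "S \<subseteq> A" "u \<notin> S"
    using assms(1) by (auto simp: S_def A_def nbh_def simple_graph_def)
  have isolated_sub: "?isolated \<subseteq> step V E g t -` ?target"
    using step_isolates_candidate[OF assms(4,6) cand_enabled nbh_B]
    by (auto simp: S_def)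
  have "1 / (exp 1 * (real (maxdeg V E) + 1)) \<le> ?p u * (\<Prod>v\<in>S. 1 - ?p v)"
    using isolation_probability_lower_bound[OF assms(1,3) u nbh_B S(1)] .
  also have "\<dots> = measure_pmf.prob (coins V E g t) ?isolated"
    unfolding coins_def A_def[symmetric]
    using measure_Pi_pmf_bernoulli_pattern[of A "{u}" S ?p False] A S(2,3)
    by (simp add: cand_prob_nonneg cand_prob_le_one)
  also have "\<dots> \<le> measure_pmf.prob (coins V E g t) (step V E g t -` ?target)"
    using isolated_sub by (rule measure_pmf.finite_measure_mono) simp
  also have "\<dots> = measure_pmf.prob (trans_dist V E g t) ?target"
    by (simp only: trans_dist_def measure_map_pmf)
  finally show ?thesis .
qed

end
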